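(* The Mixing method $M_\theta$ with a step size $\theta\in\left(0,\frac{1}{\max_i\|c_i\|_1}\right)$ never degenerates. That is, there is a constant $\delta\in(0,1)$ such that $\|\theta Vc_i\|\le1-\delta<1$ and $\|v_i-\theta Vc_i\|\ge\delta>0$.
   Context: Let $C\in\mathbb{R}^{n\times n}$ be symmetric with columns $c_i$ and $c_{ii}=0$; $V\in\mathbb{R}^{k\times n}$ has unit-norm columns $v_i$ ($\|\cdot\|$ the Euclidean norm, $\|\cdot\|_1$ the $1$-norm). The Mixing method with step size $\theta$, $M_\theta$, cyclically for $i=1,\ldots,n$ sets $v_i:=(v_i-\theta\sum_j c_{ij}v_j)/\|v_i-\theta\sum_j c_{ij}v_j\|$ using the most recent values of the $v_j$; the statement applies to every such (feasible) $V$ encountered. *)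

theory Defs
  imports "HOL-Analysis.Analysis"
begin

end

theory Submission
  imports Defs
begin

text \<open>Since the columns of \<open>V\<close> are unit vectors, \<open>\<parallel>V c\<^sub>i\<parallel> \<le> \<parallel>c\<^sub>i\<parallel>\<^sub>1\<close>, so the step
  \<open>\<theta> V c\<^sub>i\<close> has length at most \<open>\<theta> max\<^sub>i \<parallel>c\<^sub>i\<parallel>\<^sub>1 < 1\<close>; the reverse triangle inequality
  then keeps \<open>v\<^sub>i - \<theta> V c\<^sub>i\<close> away from zero.\<close>

lemma norm_matrix_vector_mult_le_sum_abs:
  fixes V :: "real^'n^'k" and x :: "real^'n"
  assumes "\<And>j. norm (column j V) \<le> 1"
  shows "norm (V *v x) \<le> (\<Sum>j\<in>UNIV. \<bar>x $ j\<bar>)"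
proof -
  have "norm (V *v x) = norm (\<Sum>j\<in>UNIV. x $ j *\<^sub>R column j V)"
    by (simp add: matrix_mult_sum scalar_mult_eq_scaleR)
  also have "\<dots> \<le> (\<Sum>j\<in>UNIV. \<bar>x $ j\<bar> * norm (column j V))"
    by (rule order_trans[OF norm_sum]) simp
  also have "\<dots> \<le> (\<Sum>j\<in>UNIV. \<bar>x $ j\<bar>)"
    by (rule sum_mono) (simp add: assms mult_left_le)
  finally show ?thesis .
qed

lemma norm_matrix_vector_mult_column_le_max_column_sum:
  fixes V :: "real^'n^'k" and C :: "real^'n^'n"
  assumes "\<And>j. norm (column j V) \<le> 1"
  shows "norm (V *v column i C) \<le> (MAX i\<in>UNIV. \<Sum>j\<in>UNIV. \<bar>C $ j $ i\<bar>)"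
proof -
  have "norm (V *v column i C) \<le> (\<Sum>j\<in>UNIV. \<bar>C $ j $ i\<bar>)"
    using norm_matrix_vector_mult_le_sum_abs[OF assms, of "column i C"]
    by (simp add: column_def)
  also have "\<dots> \<le> (MAX i\<in>UNIV. \<Sum>j\<in>UNIV. \<bar>C $ j $ i\<bar>)"
    by (rule Max_ge) auto
  finally show ?thesis .
qed

theorem lemma13:
  fixes C :: "real^'n^'n" and \<theta> :: real
  assumes sym: "transpose C = C"
    and diag: "\<And>i. C $ i $ i = 0"
    and theta_pos: "0 < \<theta>"
    and theta_small: "\<theta> * (MAX i\<in>UNIV. (\<Sum>j\<in>UNIV. \<bar>C $ j $ i\<bar>)) < 1"
  shows "\<exists>\<delta>::real. 0 < \<delta> \<and> \<delta> < 1 \<and>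
           (\<forall>V :: real^'n^'k. (\<forall>j. norm (column j V) = 1) \<longrightarrow>
              (\<forall>i. norm (\<theta> *\<^sub>R (V *v column i C)) \<le> 1 - \<delta> \<and>
                   norm (column i V - \<theta> *\<^sub>R (V *v column i C)) \<ge> \<delta>))"
proof -
  define m where "m = (MAX i\<in>UNIV. \<Sum>j\<in>UNIV. \<bar>C $ j $ i\<bar>)"
  \<comment> \<open>The \<open>1/2\<close> only matters for \<open>C = 0\<close>, where \<open>1 - \<theta> m = 1\<close>.\<close>
  define \<delta> where "\<delta> = min (1 - \<theta> * m) (1/2)"
  have \<delta>: "0 < \<delta>" "\<delta> < 1" "\<theta> * m \<le> 1 - \<delta>"
    using theta_small unfolding \<delta>_def m_def by auto
  show ?thesis
  proof (intro exI conjI allI impI)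
    fix V :: "real^'n^'k" and i
    assume V: "\<forall>j. norm (column j V) = 1"
    have "norm (\<theta> *\<^sub>R (V *v column i C)) \<le> \<theta> * m"
      using norm_matrix_vector_mult_column_le_max_column_sum[where V = V and C = C and i = i]
        V theta_pos
      by (simp add: m_def mult_left_mono)
    then show step: "norm (\<theta> *\<^sub>R (V *v column i C)) \<le> 1 - \<delta>"
      using \<delta> by linarith
    have "norm (column i V) - norm (\<theta> *\<^sub>R (V *v column i C))
           \<le> norm (column i V - \<theta> *\<^sub>R (V *v column i C))"
      by (rule norm_triangle_ineq2)
    then show "\<delta> \<le> norm (column i V - \<theta> *\<^sub>R (V *v column i C))"
      using V step by simp
  qed (use \<delta> in auto)
qed

end
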